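(* Let $T$ be a tree and $s\in C$ any scenario of $T$. Then $T$ has a prime broadcast center under $s$.
   Context: $T$ is a finite tree with vertex set $V(T)$, $|V(T)|=n$, and edge set $E(T)$. Each edge $(u,v)$ carries an interval $[w^-_{u,v},w^+_{u,v}]$ of non-negative reals. A scenario $s$ assigns to every edge $(u,v)$ a weight $w^s_{u,v}\in[w^-_{u,v},w^+_{u,v}]$; $C$ is the set of all scenarios. A constant $\rho>0$ (connection time) is fixed. Broadcast time (postal model): for a subtree $G$ of $T$ and $u\in V(G)$, $b^s(u,G)$ is defined recursively by $b^s(u,G)=0$ if $u$ has no neighbour in $G$; otherwise, if $v_1,\dots,v_h$ are the neighbours of $u$ in $G$ and $G_{v}$ denotes the component of $G-u$ containing $v$, then $b^s(u,G)=\min_{\pi}\max_{1\le k\le h}\big(k\rho+w^s_{u,v_{\pi(k)}}+b^s(v_{\pi(k)},G_{v_{\pi(k)}})\big)$, the minimum over all permutations $\pi$ of $\{1,\dots,h\}$. The set of broadcast centers under $s$ is $B^s=\{u\in V(T): b^s(u,T)\le b^s(v,T)\ \forall v\in V(T)\}$. For distinct $x,y\in V(T)$, $T_{x,y}$ denotes the component of $T-x$ containing $y$, and $\bar T_{x,y}$ denotes the subtree of $T$ induced by $V(T)\setminus V(T_{x,y})$ (it contains $x$). A vertex $\hat\kappa\in B^s$ is a prime broadcast center of $T$ under $s$ if $b^s(\hat\kappa,\bar T_{\hat\kappa,u})\ge b^s(u,\bar T_{u,\hat\kappa})$ for every neighbour $u$ of $\hat\kappa$ in $T$. *)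

theory Defs
  imports Main "HOL-Library.Extended_Real"
begin

text \<open>A graph is given by a vertex set V and a symmetric adjacency relation E.
  Subtrees are represented by their vertex sets (induced subgraphs).\<close>

definition restr :: "('a \<Rightarrow> 'a \<Rightarrow> bool) \<Rightarrow> 'a set \<Rightarrow> 'a \<Rightarrow> 'a \<Rightarrow> bool" where
  "restr E S a b \<longleftrightarrow> E a b \<and> a \<in> S \<and> b \<in> S"

definition comp :: "('a \<Rightarrow> 'a \<Rightarrow> bool) \<Rightarrow> 'a set \<Rightarrow> 'a \<Rightarrow> 'a set" where
  "comp E S v = {x. (restr E S)\<^sup>*\<^sup>* v x}"

text \<open>A finite tree: finite nonempty vertex set, symmetric irreflexive edges inside V,
  connected, and every edge is a bridge (minimally connected = acyclic).\<close>
definition is_tree :: "'a set \<Rightarrow> ('a \<Rightarrow> 'a \<Rightarrow> bool) \<Rightarrow> bool" where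
  "is_tree V E \<longleftrightarrow> finite V \<and> V \<noteq> {} \<and>
     (\<forall>u v. E u v \<longrightarrow> u \<in> V \<and> v \<in> V \<and> u \<noteq> v \<and> E v u) \<and>
     (\<forall>x\<in>V. \<forall>y\<in>V. (restr E V)\<^sup>*\<^sup>* x y) \<and>
     (\<forall>u v. E u v \<longrightarrow>
        \<not> (\<lambda>a b. restr E V a b \<and> {a, b} \<noteq> {u, v})\<^sup>*\<^sup>* u v)"

text \<open>Broadcast time with explicit recursion depth (fuel). The recursion on a subtree
  with vertex set G only descends to strictly smaller vertex sets, so fuel card G suffices.
  Position k (0-based) in the sending order xs corresponds to k+1 in the paper.\<close>
primrec bt :: "('a \<Rightarrow> 'a \<Rightarrow> bool) \<Rightarrow> ('a \<Rightarrow> 'a \<Rightarrow> real) \<Rightarrow> real \<Rightarrow> nat \<Rightarrow> 'a set \<Rightarrow> 'a \<Rightarrow> real" where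
  "bt E w \<rho> 0 G u = 0"
| "bt E w \<rho> (Suc n) G u =
     (if {v \<in> G. E u v} = {} then 0
      else Min ((\<lambda>xs. Max ((\<lambda>k. real (Suc k) * \<rho> + w u (xs ! k)
                   + bt E w \<rho> n (comp E (G - {u}) (xs ! k)) (xs ! k)) ` {..<length xs}))
              ` {xs. distinct xs \<and> set xs = {v \<in> G. E u v}}))"

definition broadcast_time :: "('a \<Rightarrow> 'a \<Rightarrow> bool) \<Rightarrow> ('a \<Rightarrow> 'a \<Rightarrow> real) \<Rightarrow> real \<Rightarrow> 'a set \<Rightarrow> 'a \<Rightarrow> real" where
  "broadcast_time E w \<rho> G u = bt E w \<rho> (card G) G u"

definition T_comp :: "'a set \<Rightarrow> ('a \<Rightarrow> 'a \<Rightarrow> bool) \<Rightarrow> 'a \<Rightarrow> 'a \<Rightarrow> 'a set" where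
  "T_comp V E x y = comp E (V - {x}) y"

definition T_bar :: "'a set \<Rightarrow> ('a \<Rightarrow> 'a \<Rightarrow> bool) \<Rightarrow> 'a \<Rightarrow> 'a \<Rightarrow> 'a set" where
  "T_bar V E x y = V - T_comp V E x y"

definition broadcast_centers :: "'a set \<Rightarrow> ('a \<Rightarrow> 'a \<Rightarrow> bool) \<Rightarrow> ('a \<Rightarrow> 'a \<Rightarrow> real) \<Rightarrow> real \<Rightarrow> 'a set" where
  "broadcast_centers V E w \<rho> =
     {u \<in> V. \<forall>v\<in>V. broadcast_time E w \<rho> V u \<le> broadcast_time E w \<rho> V v}"

definition prime_broadcast_center :: "'a set \<Rightarrow> ('a \<Rightarrow> 'a \<Rightarrow> bool) \<Rightarrow> ('a \<Rightarrow> 'a \<Rightarrow> real) \<Rightarrow> real \<Rightarrow> 'a \<Rightarrow> bool" where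
  "prime_broadcast_center V E w \<rho> k \<longleftrightarrow>
     k \<in> broadcast_centers V E w \<rho> \<and>
     (\<forall>u. E k u \<longrightarrow>
        broadcast_time E w \<rho> (T_bar V E k u) k \<ge> broadcast_time E w \<rho> (T_bar V E u k) u)"

definition scenario :: "('a \<Rightarrow> 'a \<Rightarrow> bool) \<Rightarrow> ('a \<Rightarrow> 'a \<Rightarrow> real) \<Rightarrow> ('a \<Rightarrow> 'a \<Rightarrow> real)
                        \<Rightarrow> ('a \<Rightarrow> 'a \<Rightarrow> real) \<Rightarrow> bool" where
  "scenario E wlo whi w \<longleftrightarrow>
     (\<forall>u v. E u v \<longrightarrow> wlo u v \<le> w u v \<and> w u v \<le> whi u v \<and> w u v = w v u)"

end

theory Submission
  imports Defs
begin

text \<open>If a broadcast center \<open>k\<close> is not prime, it has a neighbour \<open>u\<close> that needs strictly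
  longer to inform its side \<open>bar T_{u,k}\<close> of the edge \<open>ku\<close> than \<open>k\<close> needs for its side
  \<open>bar T_{k,u}\<close>. Then \<open>u\<close> is a broadcast center too: \<open>k\<close> needs at least
  \<open>\<rho> + w(k,u) + b(u, bar T_{u,k})\<close>, while \<open>u\<close> stays within this bound by calling \<open>k\<close> first
  and then following an optimal order for its own side, delayed by \<open>\<rho>\<close>. Passing from the pair
  \<open>(k,u)\<close> to the next pair \<open>(u,u')\<close> strictly shrinks \<open>T_{k,u}\<close> to \<open>T_{u,u'}\<close>, so a pair
  with smallest \<open>T_{k,u}\<close> can only exist if some broadcast center is prime.\<close>

lemma comp_refl [simp]: "x \<in> comp E S x"
  by (simp add: comp_def)

lemma comp_subset:
  assumes "x \<in> S" shows "comp E S x \<subseteq> S"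
proof
  fix y assume "y \<in> comp E S x"
  then have "(restr E S)\<^sup>*\<^sup>* x y" by (simp add: comp_def)
  then show "y \<in> S" using assms by induction (auto simp: restr_def)
qed

lemma comp_step: "y \<in> comp E S x \<Longrightarrow> restr E S y z \<Longrightarrow> z \<in> comp E S x"
  by (auto simp: comp_def intro: rtranclp.rtrancl_into_rtrancl)

lemma comp_mono: "S \<subseteq> S' \<Longrightarrow> comp E S x \<subseteq> comp E S' x"
proof -
  assume "S \<subseteq> S'"
  then have "(restr E S)\<^sup>*\<^sup>* \<le> (restr E S')\<^sup>*\<^sup>*"
    by (intro rtranclp_mono) (auto simp: restr_def)
  then show ?thesis by (auto simp: comp_def)
qed

lemma comp_sym:
  assumes "symp E" and "y \<in> comp E S x"
  shows "x \<in> comp E S y"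
proof -
  have "symp (restr E S)" using assms(1) by (auto simp: restr_def symp_def)
  then have "symp (restr E S)\<^sup>*\<^sup>*" by (rule symp_rtranclp)
  with assms(2) show ?thesis by (auto simp: comp_def dest: sympD)
qed

lemma comp_disjoint:
  assumes "symp E" and "y \<notin> comp E S x"
  shows "comp E S x \<inter> comp E S y = {}"
proof -
  have "y \<in> comp E S x" if "z \<in> comp E S x" "z \<in> comp E S y" for z
    using that comp_sym[OF assms(1)] rtranclp_trans[of "restr E S" x z y] by (auto simp: comp_def)
  then show ?thesis using assms(2) by blast
qed

lemma comp_within_itself: "comp E S x \<subseteq> comp E (S \<inter> comp E S x) x"
proof
  fix y assume "y \<in> comp E S x"
  then have "(restr E S)\<^sup>*\<^sup>* x y" by (simp add: comp_def)
  then show "y \<in> comp E (S \<inter> comp E S x) x"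
  proof (induction rule: rtranclp_induct)
    case (step y z)
    have "y \<in> comp E S x" using step.hyps(1) by (simp add: comp_def)
    moreover from this have "z \<in> comp E S x" using step.hyps(2) by (rule comp_step)
    ultimately have "restr E (S \<inter> comp E S x) y z" using step.hyps(2) by (simp add: restr_def)
    with step.IH show ?case by (rule comp_step)
  qed simp
qed

lemma comp_restrict:
  assumes "symp E" and "y \<notin> comp E S x"
  shows "comp E (S - comp E S x) y = comp E S y"
proof
  show "comp E (S - comp E S x) y \<subseteq> comp E S y" by (rule comp_mono) blast
  have "comp E S y \<subseteq> comp E (S \<inter> comp E S y) y" by (rule comp_within_itself)
  also have "\<dots> \<subseteq> comp E (S - comp E S x) y"
    using comp_disjoint[OF assms] by (intro comp_mono) blast
  finally show "comp E S y \<subseteq> comp E (S - comp E S x) y" .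
qed

lemma tree_edge: "is_tree V E \<Longrightarrow> E u v \<Longrightarrow> u \<in> V \<and> v \<in> V \<and> u \<noteq> v \<and> E v u"
  by (simp add: is_tree_def)

lemma tree_symp: "is_tree V E \<Longrightarrow> symp E"
  by (rule sympI) (simp add: is_tree_def)

lemma tree_irreflp: "is_tree V E \<Longrightarrow> irreflp E"
  by (rule irreflpI) (auto simp: is_tree_def)

lemma tree_connected: "is_tree V E \<Longrightarrow> x \<in> V \<Longrightarrow> y \<in> V \<Longrightarrow> (restr E V)\<^sup>*\<^sup>* x y"
  by (simp add: is_tree_def)

lemma tree_edge_bridge:
  "is_tree V E \<Longrightarrow> E u v \<Longrightarrow> \<not> (\<lambda>a b. restr E V a b \<and> {a, b} \<noteq> {u, v})\<^sup>*\<^sup>* u v"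
  by (simp add: is_tree_def)

lemma tree_comps_disjoint:
  assumes T: "is_tree V E" and e: "E k u"
  shows "comp E (V - {u}) k \<inter> comp E (V - {k}) u = {}"
proof (rule ccontr)
  assume "\<not> ?thesis"
  then obtain x where kx: "(restr E (V - {u}))\<^sup>*\<^sup>* k x" and ux: "(restr E (V - {k}))\<^sup>*\<^sup>* u x"
    by (auto simp: comp_def)
  (* paths avoiding u or avoiding k never use the edge ku, which is a bridge *)
  define R where "R = (\<lambda>a b. restr E V a b \<and> {a, b} \<noteq> {u, k})"
  have "(restr E (V - {u}))\<^sup>*\<^sup>* \<le> R\<^sup>*\<^sup>*" "(restr E (V - {k}))\<^sup>*\<^sup>* \<le> R\<^sup>*\<^sup>*"
    by (intro rtranclp_mono; auto simp: R_def restr_def doubleton_eq_iff)+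
  with kx ux have "R\<^sup>*\<^sup>* k x" "R\<^sup>*\<^sup>* u x" by blast+
  moreover have "symp R\<^sup>*\<^sup>*"
    using tree_symp[OF T] by (intro symp_rtranclp) (auto simp: R_def restr_def symp_def insert_commute)
  ultimately have "R\<^sup>*\<^sup>* u k" by (blast dest: sympD intro: rtranclp_trans)
  moreover have "E u k" using tree_edge[OF T e] by blast
  ultimately show False
    using tree_edge_bridge[OF T] unfolding R_def by blast
qed

lemma tree_comps_cover:
  assumes T: "is_tree V E" and e: "E k u"
  shows "V \<subseteq> comp E (V - {u}) k \<union> comp E (V - {k}) u"
proof
  fix x assume "x \<in> V"
  then have "(restr E V)\<^sup>*\<^sup>* k x" using tree_connected[OF T] tree_edge[OF T e] by blast
  then show "x \<in> comp E (V - {u}) k \<union> comp E (V - {k}) u"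
  proof (induction rule: rtranclp_induct)
    case (step y z)
    have edge: "E y z" "y \<in> V" "z \<in> V" using step.hyps(2) by (simp_all add: restr_def)
    show ?case
    proof (cases "y \<in> comp E (V - {u}) k")
      case True
      then have "y \<noteq> u" using comp_subset[of k "V - {u}" E] tree_edge[OF T e] by blast
      then have "z = u \<or> restr E (V - {u}) y z" using edge by (auto simp: restr_def)
      then show ?thesis using True comp_step by fastforce
    next
      case False
      with step.IH have yB: "y \<in> comp E (V - {k}) u" by blast
      then have "y \<noteq> k" using comp_subset[of u "V - {k}" E] tree_edge[OF T e] by blast
      then have "z = k \<or> restr E (V - {k}) y z" using edge by (auto simp: restr_def)
      then show ?thesis using yB comp_step by fastforce
    qed
  qed simp
qed

lemma tree_comp_complement:
  assumes "is_tree V E" and "E k u"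
  shows "V - comp E (V - {k}) u = comp E (V - {u}) k"
proof -
  have "comp E (V - {u}) k \<subseteq> V" using comp_subset[of k "V - {u}" E] tree_edge[OF assms] by blast
  then show ?thesis using tree_comps_disjoint[OF assms] tree_comps_cover[OF assms] by blast
qed

lemma T_bar_edge: "is_tree V E \<Longrightarrow> E k u \<Longrightarrow> T_bar V E k u = comp E (V - {u}) k"
  by (simp add: T_bar_def T_comp_def tree_comp_complement)

lemma tree_neighbour_in_comp:
  assumes "is_tree V E" and "E u v" and "u \<noteq> k" and "v \<noteq> k"
  shows "v \<in> comp E (V - {k}) u"
proof -
  have "restr E (V - {k}) u v" using assms tree_edge[OF assms(1,2)] by (auto simp: restr_def)
  then show ?thesis by (rule comp_step[OF comp_refl])
qed

lemma tree_comp_psubset: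
  assumes T: "is_tree V E" and e: "E k u" and e': "E u v" and "v \<noteq> k"
  shows "comp E (V - {u}) v \<subset> comp E (V - {k}) u"
proof -
  have "u \<noteq> k" using tree_edge[OF T e] by blast
  then have "v \<in> comp E (V - {k}) u" using tree_neighbour_in_comp[OF T e'] \<open>v \<noteq> k\<close> by blast
  then have "v \<notin> comp E (V - {u}) k" using tree_comps_disjoint[OF T e] by blast
  then have "comp E (V - {u}) v \<inter> comp E (V - {u}) k = {}"
    using comp_disjoint[OF tree_symp[OF T]] by blast
  moreover have "comp E (V - {u}) v \<subseteq> V - {u}"
    using comp_subset[of v "V - {u}" E] tree_edge[OF T e'] by blast
  moreover have "u \<in> comp E (V - {k}) u" by simp
  ultimately show ?thesis
    using tree_comp_complement[OF T e] by blast
qed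

definition sending_orders :: "('a \<Rightarrow> 'a \<Rightarrow> bool) \<Rightarrow> 'a set \<Rightarrow> 'a \<Rightarrow> 'a list set" where
  "sending_orders E G u = {xs. distinct xs \<and> set xs = {v \<in> G. E u v}}"

(* f v is the time the subtree hanging at v needs once v is informed; for xs = [] the value is
   the junk Max {}. *)
definition schedule_time :: "('a \<Rightarrow> 'a \<Rightarrow> real) \<Rightarrow> real \<Rightarrow> ('a \<Rightarrow> real) \<Rightarrow> 'a \<Rightarrow> 'a list \<Rightarrow> real" where
  "schedule_time w \<rho> f u xs = Max ((\<lambda>i. real (Suc i) * \<rho> + w u (xs ! i) + f (xs ! i)) ` {..<length xs})"

definition child_broadcast_time ::
    "('a \<Rightarrow> 'a \<Rightarrow> bool) \<Rightarrow> ('a \<Rightarrow> 'a \<Rightarrow> real) \<Rightarrow> real \<Rightarrow> 'a set \<Rightarrow> 'a \<Rightarrow> 'a \<Rightarrow> real" where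
  "child_broadcast_time E w \<rho> G u v = broadcast_time E w \<rho> (comp E (G - {u}) v) v"

lemma sending_orders_finite: "finite G \<Longrightarrow> finite (sending_orders E G u)"
  unfolding sending_orders_def by (rule finite_subset[OF _ finite_subset_distinct]) auto

lemma sending_orders_nonempty: "finite G \<Longrightarrow> sending_orders E G u \<noteq> {}"
  using finite_distinct_list[of "{v \<in> G. E u v}"] by (auto simp: sending_orders_def)

lemma schedule_time_cong:
  "(\<And>v. v \<in> set xs \<Longrightarrow> f v = g v) \<Longrightarrow> schedule_time w \<rho> f u xs = schedule_time w \<rho> g u xs"
  unfolding schedule_time_def by (intro arg_cong[where f = Max] image_cong) auto

lemma schedule_time_ge:
  "i < length xs \<Longrightarrow> real (Suc i) * \<rho> + w u (xs ! i) + f (xs ! i) \<le> schedule_time w \<rho> f u xs"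
  unfolding schedule_time_def by (intro Max_ge) auto

lemma schedule_time_le_iff:
  "xs \<noteq> [] \<Longrightarrow> schedule_time w \<rho> f u xs \<le> c \<longleftrightarrow>
     (\<forall>i < length xs. real (Suc i) * \<rho> + w u (xs ! i) + f (xs ! i) \<le> c)"
  unfolding schedule_time_def by (subst Max_le_iff) auto

lemma schedule_time_Cons_le_iff:
  "schedule_time w \<rho> f u (x # xs) \<le> c \<longleftrightarrow> \<rho> + w u x + f x \<le> c \<and>
     (\<forall>i < length xs. \<rho> + (real (Suc i) * \<rho> + w u (xs ! i) + f (xs ! i)) \<le> c)"
  by (auto simp: schedule_time_le_iff less_Suc_eq_0_disj algebra_simps)

lemma bt_Suc_schedule:
  "bt E w \<rho> (Suc n) G u = (if {v \<in> G. E u v} = {} then 0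
     else Min (schedule_time w \<rho> (\<lambda>v. bt E w \<rho> n (comp E (G - {u}) v) v) u ` sending_orders E G u))"
  unfolding schedule_time_def[abs_def] sending_orders_def by (simp only: bt.simps)

lemma card_comp_less:
  assumes "finite G" and "u \<in> G" and "v \<in> G - {u}"
  shows "card (comp E (G - {u}) v) < card G"
  using assms psubset_card_mono[of G "comp E (G - {u}) v"] comp_subset[of v "G - {u}" E] by blast

lemma bt_eq_broadcast_time:
  assumes "irreflp E"
  shows "finite G \<Longrightarrow> u \<in> G \<Longrightarrow> card G \<le> n \<Longrightarrow> bt E w \<rho> n G u = broadcast_time E w \<rho> G u"
proof (induction n arbitrary: G u rule: less_induct)
  case (less n)
  obtain m where m: "card G = Suc m" using less.prems by (cases "card G") auto
  with less.prems obtain n' where n: "n = Suc n'" by (cases n) auto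
  have sub: "bt E w \<rho> n' (comp E (G - {u}) v) v = bt E w \<rho> m (comp E (G - {u}) v) v"
    if "v \<in> {v \<in> G. E u v}" for v
  proof -
    have v: "v \<in> G - {u}" using that irreflpD[OF assms] by auto
    have "finite (comp E (G - {u}) v)"
      using less.prems(1) comp_subset[OF v] finite_subset by blast
    moreover have "card (comp E (G - {u}) v) \<le> m" "m \<le> n'" "m < n"
      using card_comp_less[OF less.prems(1,2) v, of E] m n less.prems(3) by auto
    ultimately show ?thesis
      using less.IH[of n'] less.IH[of m] n by simp
  qed
  have "bt E w \<rho> n G u = bt E w \<rho> (Suc m) G u"
    unfolding n bt_Suc_schedule
    by (intro if_cong refl arg_cong[where f = Min] image_cong schedule_time_cong sub)
       (auto simp: sending_orders_def)
  then show ?case by (simp add: broadcast_time_def m)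
qed

lemma broadcast_time_eq_Min:
  assumes "irreflp E" and "finite G" and "u \<in> G" and "{v \<in> G. E u v} \<noteq> {}"
  shows "broadcast_time E w \<rho> G u
           = Min (schedule_time w \<rho> (child_broadcast_time E w \<rho> G u) u ` sending_orders E G u)"
proof -
  obtain n where n: "card G = Suc n" using assms(2,3) by (cases "card G") auto
  have "bt E w \<rho> n (comp E (G - {u}) v) v = child_broadcast_time E w \<rho> G u v"
    if "v \<in> {v \<in> G. E u v}" for v
  proof -
    have v: "v \<in> G - {u}" using that irreflpD[OF assms(1)] by auto
    show ?thesis
      unfolding child_broadcast_time_def
      using bt_eq_broadcast_time[OF assms(1)] finite_subset[OF comp_subset[OF v]] assms(2)
        card_comp_less[OF assms(2,3) v, of E] n by simp
  qed
  then show ?thesis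
    unfolding broadcast_time_def n bt_Suc_schedule if_not_P[OF assms(4)]
    by (intro arg_cong[where f = Min] image_cong refl schedule_time_cong)
       (auto simp: sending_orders_def)
qed

lemma broadcast_time_ge_child:
  assumes "irreflp E" and "finite G" and "u \<in> G" and "v \<in> G" and "E u v" and "0 \<le> \<rho>"
  shows "\<rho> + w u v + child_broadcast_time E w \<rho> G u v \<le> broadcast_time E w \<rho> G u"
proof -
  have "\<rho> + w u v + child_broadcast_time E w \<rho> G u v \<le> schedule_time w \<rho> (child_broadcast_time E w \<rho> G u) u xs"
    if "xs \<in> sending_orders E G u" for xs
  proof -
    have "v \<in> set xs" using that assms(4,5) by (simp add: sending_orders_def)
    then obtain i where i: "i < length xs" "xs ! i = v" by (auto simp: in_set_conv_nth)
    have "\<rho> \<le> real (Suc i) * \<rho>" using assms(6) by (simp add: mult_le_cancel_right1)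
    then show ?thesis
      using schedule_time_ge[OF i(1), of \<rho> w u "child_broadcast_time E w \<rho> G u"] i(2) by simp
  qed
  moreover have "{x \<in> G. E u x} \<noteq> {}" using assms(4,5) by auto
  ultimately show ?thesis
    using sending_orders_finite[OF assms(2), of E u] sending_orders_nonempty[OF assms(2), of E u]
    by (simp add: broadcast_time_eq_Min[OF assms(1-3)] Min_ge_iff)
qed

lemma broadcast_time_le_schedule:
  assumes "irreflp E" and "finite G" and "u \<in> G"
    and "xs \<in> sending_orders E G u" and "xs \<noteq> []"
  shows "broadcast_time E w \<rho> G u \<le> schedule_time w \<rho> (child_broadcast_time E w \<rho> G u) u xs"
proof -
  have "{x \<in> G. E u x} = set xs" using assms(4) by (simp add: sending_orders_def)
  then have "{x \<in> G. E u x} \<noteq> {}" using assms(5) by simp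
  then show ?thesis
    using sending_orders_finite[OF assms(2), of E u] assms(4)
    by (simp add: broadcast_time_eq_Min[OF assms(1-3)] Min_le)
qed

lemma optimal_sending_order:
  assumes "irreflp E" and "finite G" and "u \<in> G"
  obtains xs where "xs \<in> sending_orders E G u"
    and "\<And>i. i < length xs \<Longrightarrow>
           real (Suc i) * \<rho> + w u (xs ! i) + child_broadcast_time E w \<rho> G u (xs ! i) \<le> broadcast_time E w \<rho> G u"
proof (cases "{x \<in> G. E u x} = {}")
  case True
  then show ?thesis using that[of "[]"] by (simp add: sending_orders_def)
next
  case False
  let ?S = "schedule_time w \<rho> (child_broadcast_time E w \<rho> G u) u"
  have "Min (?S ` sending_orders E G u) \<in> ?S ` sending_orders E G u"
    using sending_orders_finite[OF assms(2)] sending_orders_nonempty[OF assms(2)] by (intro Min_in) auto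
  then obtain xs where xs: "xs \<in> sending_orders E G u" "Min (?S ` sending_orders E G u) = ?S xs"
    by blast
  then have "broadcast_time E w \<rho> G u = ?S xs"
    using broadcast_time_eq_Min[OF assms(1-3) False] by simp
  then show ?thesis
    using that[OF xs(1)] schedule_time_ge by metis
qed

lemma sending_orders_Cons_across_edge:
  assumes T: "is_tree V E" and e: "E k u" and ys: "ys \<in> sending_orders E (comp E (V - {k}) u) u"
  shows "k # ys \<in> sending_orders E V u"
proof -
  let ?B = "comp E (V - {k}) u"
  have uk: "u \<noteq> k" and e': "E u k" and kV: "k \<in> V" and uV: "u \<in> V"
    using tree_edge[OF T e] by blast+
  have "x \<in> ?B" if "E u x" "x \<noteq> k" for x
    using tree_neighbour_in_comp[OF T that(1) uk that(2)] .
  moreover have B: "?B \<subseteq> V - {k}" using comp_subset[of u "V - {k}" E] uV uk by blast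
  ultimately have "{x \<in> V. E u x} = insert k {x \<in> ?B. E u x}" using e' kV by blast
  then show ?thesis using ys B by (auto simp: sending_orders_def)
qed

lemma child_broadcast_time_side:
  assumes T: "is_tree V E" and e: "E k u" and v: "v \<in> comp E (V - {k}) u"
  shows "child_broadcast_time E w \<rho> (comp E (V - {k}) u) u v = child_broadcast_time E w \<rho> V u v"
proof -
  have "v \<notin> comp E (V - {u}) k" using v tree_comps_disjoint[OF T e] by blast
  moreover have "comp E (V - {k}) u - {u} = (V - {u}) - comp E (V - {u}) k"
    using tree_comp_complement[OF T e] comp_subset[of u "V - {k}" E] tree_edge[OF T e] by blast
  ultimately show ?thesis
    by (simp add: child_broadcast_time_def comp_restrict[OF tree_symp[OF T]])
qed

lemma broadcast_time_le_toward_heavier_side: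
  assumes T: "is_tree V E" and w_nonneg: "\<And>a b. E a b \<Longrightarrow> 0 \<le> w a b"
    and w_sym: "\<And>a b. E a b \<Longrightarrow> w a b = w b a" and "0 \<le> \<rho>" and e: "E k u"
    and heavier: "broadcast_time E w \<rho> (T_bar V E k u) k < broadcast_time E w \<rho> (T_bar V E u k) u"
  shows "broadcast_time E w \<rho> V u \<le> broadcast_time E w \<rho> V k"
proof -
  define B where "B = comp E (V - {k}) u"
  have irrefl: "irreflp E" using tree_irreflp[OF T] .
  have e': "E u k" and uk: "u \<noteq> k" and kV: "k \<in> V" and uV: "u \<in> V"
    using tree_edge[OF T e] by blast+
  have fin: "finite V" using T by (simp add: is_tree_def)
  have finB: "finite B" and uB: "u \<in> B"
    using comp_subset[of u "V - {k}" E] uV uk fin finite_subset by (auto simp: B_def)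
  have heavier': "broadcast_time E w \<rho> (comp E (V - {u}) k) k < broadcast_time E w \<rho> B u"
    using heavier by (simp add: T_bar_edge[OF T e] T_bar_edge[OF T e'] B_def)
  obtain ys where ys: "ys \<in> sending_orders E B u"
    and ys_bound: "\<And>i. i < length ys \<Longrightarrow> real (Suc i) * \<rho> + w u (ys ! i)
                     + child_broadcast_time E w \<rho> B u (ys ! i) \<le> broadcast_time E w \<rho> B u"
    using optimal_sending_order[OF irrefl finB uB] by blast
  have "k # ys \<in> sending_orders E V u"
    using sending_orders_Cons_across_edge[OF T e] ys by (simp add: B_def)
  then have "broadcast_time E w \<rho> V u \<le> schedule_time w \<rho> (child_broadcast_time E w \<rho> V u) u (k # ys)"
    by (rule broadcast_time_le_schedule[OF irrefl fin uV]) simp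
  also have "\<dots> \<le> \<rho> + w k u + broadcast_time E w \<rho> B u"
    unfolding schedule_time_Cons_le_iff
  proof (intro conjI allI impI)
    show "\<rho> + w u k + child_broadcast_time E w \<rho> V u k \<le> \<rho> + w k u + broadcast_time E w \<rho> B u"
      using heavier' w_sym[OF e] by (simp add: child_broadcast_time_def)
    fix i assume i: "i < length ys"
    then have "ys ! i \<in> B" using ys nth_mem by (fastforce simp: sending_orders_def)
    then show "\<rho> + (real (Suc i) * \<rho> + w u (ys ! i) + child_broadcast_time E w \<rho> V u (ys ! i))
               \<le> \<rho> + w k u + broadcast_time E w \<rho> B u"
      using ys_bound[OF i] child_broadcast_time_side[OF T e] w_nonneg[OF e] by (simp add: B_def)
  qed
  also have "\<dots> \<le> broadcast_time E w \<rho> V k"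
    using broadcast_time_ge_child[OF irrefl fin kV uV e \<open>0 \<le> \<rho>\<close>]
    by (simp add: child_broadcast_time_def B_def)
  finally show ?thesis .
qed

lemma broadcast_centers_nonempty:
  assumes "finite V" and "V \<noteq> {}"
  shows "broadcast_centers V E w \<rho> \<noteq> {}"
proof -
  let ?f = "broadcast_time E w \<rho> V"
  have "Min (?f ` V) \<in> ?f ` V" using assms by simp
  then obtain k where "k \<in> V" and "?f k = Min (?f ` V)" by (metis imageE)
  then have "k \<in> broadcast_centers V E w \<rho>"
    using assms(1) by (simp add: broadcast_centers_def)
  then show ?thesis by blast
qed

lemma prime_broadcast_center_exists:
  assumes T: "is_tree V E" and w_nonneg: "\<And>a b. E a b \<Longrightarrow> 0 \<le> w a b"
    and w_sym: "\<And>a b. E a b \<Longrightarrow> w a b = w b a" and "0 \<le> \<rho>"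
  shows "\<exists>c. prime_broadcast_center V E w \<rho> c"
proof (rule ccontr)
  assume none: "\<not> ?thesis"
  define heavier where "heavier k u \<longleftrightarrow> k \<in> broadcast_centers V E w \<rho> \<and> E k u \<and>
    broadcast_time E w \<rho> (T_bar V E k u) k < broadcast_time E w \<rho> (T_bar V E u k) u" for k u
  have escape: "\<exists>u. heavier k u" if "k \<in> broadcast_centers V E w \<rho>" for k
    using none that by (auto simp: prime_broadcast_center_def heavier_def not_le)
  have "finite V" "V \<noteq> {}" using T by (simp_all add: is_tree_def)
  then obtain k0 where "k0 \<in> broadcast_centers V E w \<rho>"
    using broadcast_centers_nonempty by blast
  with escape obtain u0 where "heavier k0 u0" by blast
  then obtain k u where ku: "heavier k u"
    and least: "\<And>k' u'. heavier k' u' \<Longrightarrow> card (comp E (V - {k}) u) \<le> card (comp E (V - {k'}) u')"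
    using ex_has_least_nat[of "case_prod heavier" "(k0, u0)" "\<lambda>(k, u). card (comp E (V - {k}) u)"]
    by auto
  have e: "E k u" and k_center: "k \<in> broadcast_centers V E w \<rho>"
    using ku by (simp_all add: heavier_def)
  have "broadcast_time E w \<rho> V u \<le> broadcast_time E w \<rho> V k"
    using broadcast_time_le_toward_heavier_side[OF T w_nonneg w_sym \<open>0 \<le> \<rho>\<close> e] ku
    by (simp add: heavier_def)
  then have "u \<in> broadcast_centers V E w \<rho>"
    using k_center tree_edge[OF T e] by (force simp: broadcast_centers_def)
  with escape obtain u' where uu': "heavier u u'" by blast
  have "u' \<noteq> k" using ku uu' by (auto simp: heavier_def)
  then have "comp E (V - {u}) u' \<subset> comp E (V - {k}) u"
    using tree_comp_psubset[OF T e] uu' by (simp add: heavier_def)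
  moreover have "finite (comp E (V - {k}) u)"
    using comp_subset[of u "V - {k}" E] tree_edge[OF T e] \<open>finite V\<close> finite_subset by blast
  ultimately have "card (comp E (V - {u}) u') < card (comp E (V - {k}) u)"
    by (rule psubset_card_mono[rotated])
  with least[OF uu'] show False by simp
qed

theorem lemma3:
  fixes V :: "'a set" and E :: "'a \<Rightarrow> 'a \<Rightarrow> bool"
    and wlo whi w :: "'a \<Rightarrow> 'a \<Rightarrow> real" and \<rho> :: real
  assumes "is_tree V E"
    and "\<forall>u v. E u v \<longrightarrow> 0 \<le> wlo u v \<and> wlo u v \<le> whi u v \<and> wlo u v = wlo v u \<and> whi u v = whi v u"
    and "\<rho> > 0"
    and "scenario E wlo whi w"
  shows "\<exists>k. prime_broadcast_center V E w \<rho> k"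
proof -
  have w_nonneg: "0 \<le> w a b" if "E a b" for a b
    using assms(2,4) that unfolding scenario_def by (meson order_trans)
  have w_sym: "w a b = w b a" if "E a b" for a b
    using assms(4) that unfolding scenario_def by blast
  show ?thesis
    using prime_broadcast_center_exists[OF assms(1) w_nonneg w_sym] assms(3) by simp
qed

end
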